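(* Let $P$ be a poset with an $\mathbb{R}$-action $\Lambda$. Let $I,J$ be intervals of $P$ and $\epsilon\ge0$ with $I\subseteq\mathrm{Ex}^\Lambda_\epsilon(J)$ and $J\subseteq\mathrm{Ex}^\Lambda_\epsilon(I)$. Then $$I\cap\Lambda_{-\epsilon}(J)\cap\Lambda_{-2\epsilon}(I)=I\cap\Lambda_{-2\epsilon}(I)$$ and $$J\cap\Lambda_{-\epsilon}(I)\cap\Lambda_{-2\epsilon}(J)=J\cap\Lambda_{-2\epsilon}(J).$$
   Context: An interval of a poset $P$ is a nonempty convex and connected subset (convex: $p,q\in I$, $p\le r\le q$ imply $r\in I$; connected: any two elements are joined by a finite sequence in $I$ with consecutive ones comparable). For $A\subseteq P$ nonempty, $A^\uparrow=\{p:\exists a\in A,\ a\le p\}$ and $A^\downarrow=\{p:\exists a\in A,\ p\le a\}$; $\emptyset^\uparrow=\emptyset^\downarrow=P$. An $\mathbb{R}$-action on $P$ is a family $\{\Lambda_\epsilon\}_{\epsilon\ge0}$ of poset automorphisms with $p\le\Lambda_\epsilon(p)$, $\Lambda_0=\mathrm{id}$ and $\Lambda_\epsilon\Lambda_\zeta=\Lambda_{\epsilon+\zeta}$. Write $\Lambda_{-\epsilon}=\Lambda_\epsilon^{-1}$; $\Lambda_{-\epsilon}(J)$ denotes the image. $\mathrm{Ex}^\Lambda_\epsilon(A)=\Lambda_\epsilon^{-1}(A)^\uparrow\cap\Lambda_\epsilon(A)^\downarrow$, with $\Lambda_\epsilon^{-1}(A)$ the preimage. *)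

theory Defs
  imports Complex_Main
begin

definition up_closure :: "'a::order set \<Rightarrow> 'a set" where
  "up_closure A = (if A = {} then UNIV else {p. \<exists>a\<in>A. a \<le> p})"

definition down_closure :: "'a::order set \<Rightarrow> 'a set" where
  "down_closure A = (if A = {} then UNIV else {p. \<exists>a\<in>A. p \<le> a})"

definition convex_set :: "'a::order set \<Rightarrow> bool" where
  "convex_set I \<longleftrightarrow> (\<forall>p\<in>I. \<forall>q\<in>I. \<forall>r. p \<le> r \<and> r \<le> q \<longrightarrow> r \<in> I)"

definition connected_set :: "'a::order set \<Rightarrow> bool" where
  "connected_set I \<longleftrightarrow> (\<forall>p\<in>I. \<forall>q\<in>I. \<exists>xs. xs \<noteq> [] \<and> hd xs = p \<and> last xs = q
      \<and> set xs \<subseteq> I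
      \<and> (\<forall>i. Suc i < length xs \<longrightarrow> (xs!i \<le> xs!Suc i \<or> xs!Suc i \<le> xs!i)))"

definition is_interval :: "'a::order set \<Rightarrow> bool" where
  "is_interval I \<longleftrightarrow> I \<noteq> {} \<and> convex_set I \<and> connected_set I"

definition order_automorphism :: "('a::order \<Rightarrow> 'a) \<Rightarrow> bool" where
  "order_automorphism f \<longleftrightarrow> bij f \<and> (\<forall>x y. x \<le> y \<longleftrightarrow> f x \<le> f y)"

text \<open>An R-action: only the values at eps >= 0 are relevant.\<close>
definition R_action :: "(real \<Rightarrow> 'a::order \<Rightarrow> 'a) \<Rightarrow> bool" where
  "R_action \<Lambda> \<longleftrightarrow>
     (\<forall>e\<ge>0. order_automorphism (\<Lambda> e)) \<and>
     (\<forall>e\<ge>0. \<forall>p. p \<le> \<Lambda> e p) \<and>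
     \<Lambda> 0 = id \<and>
     (\<forall>e\<ge>0. \<forall>z\<ge>0. \<Lambda> e \<circ> \<Lambda> z = \<Lambda> (e + z))"

definition Ex_op :: "(real \<Rightarrow> 'a::order \<Rightarrow> 'a) \<Rightarrow> real \<Rightarrow> 'a set \<Rightarrow> 'a set" where
  "Ex_op \<Lambda> e A = up_closure (\<Lambda> e -` A) \<inter> down_closure (\<Lambda> e ` A)"

text \<open>Image of J under Lambda_{-e} = (Lambda_e)^{-1}.\<close>
definition neg_image :: "(real \<Rightarrow> 'a::order \<Rightarrow> 'a) \<Rightarrow> real \<Rightarrow> 'a set \<Rightarrow> 'a set" where
  "neg_image \<Lambda> e J = inv (\<Lambda> e) ` J"

end

theory Submission
  imports Defs
begin

text \<open>Pointwise: if \<open>x\<close> and \<open>\<Lambda>\<^sub>2\<^sub>\<epsilon> x\<close> both lie in \<open>Ex\<^sub>\<epsilon>(J)\<close>, then some \<open>a \<le> x\<close> has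
  \<open>\<Lambda>\<^sub>\<epsilon> a \<in> J\<close> and some \<open>b \<in> J\<close> has \<open>\<Lambda>\<^sub>2\<^sub>\<epsilon> x \<le> \<Lambda>\<^sub>\<epsilon> b\<close>; hence \<open>\<Lambda>\<^sub>\<epsilon> a \<le> \<Lambda>\<^sub>\<epsilon> x \<le> b\<close>,
  and convexity of \<open>J\<close> puts \<open>\<Lambda>\<^sub>\<epsilon> x\<close> in \<open>J\<close>. This gives the inclusions \<open>\<supseteq>\<close>;
  the inclusions \<open>\<subseteq>\<close> are trivial.\<close>

lemma R_action_order_automorphism:
  assumes "R_action \<Lambda>" and "e \<ge> 0"
  shows "order_automorphism (\<Lambda> e)"
  using assms unfolding R_action_def by blast

lemma R_action_double:
  assumes "R_action \<Lambda>" and "e \<ge> 0"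
  shows "\<Lambda> (2 * e) x = \<Lambda> e (\<Lambda> e x)"
proof -
  have "\<Lambda> e \<circ> \<Lambda> e = \<Lambda> (e + e)"
    using assms unfolding R_action_def by blast
  then show ?thesis
    by (metis comp_apply mult_2)
qed

lemma neg_image_eq_vimage:
  assumes "R_action \<Lambda>" and "e \<ge> 0"
  shows "neg_image \<Lambda> e J = \<Lambda> e -` J"
  using R_action_order_automorphism[OF assms]
  by (simp add: neg_image_def order_automorphism_def bij_vimage_eq_inv_image)

lemma convex_set_mem_shift:
  assumes f: "order_automorphism f" and J: "convex_set J" "J \<noteq> {}"
    and up: "x \<in> up_closure (f -` J)" and down: "f (f x) \<in> down_closure (f ` J)"
  shows "f x \<in> J"
proof -
  have mono_iff: "\<And>a b. a \<le> b \<longleftrightarrow> f a \<le> f b" and "surj f"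
    using f unfolding order_automorphism_def by (auto simp: bij_is_surj)
  then have "f -` J \<noteq> {}"
    using \<open>J \<noteq> {}\<close> by (metis ex_in_conv surjD vimage_eq)
  with up obtain a where a: "f a \<in> J" "a \<le> x"
    unfolding up_closure_def by auto
  from down \<open>J \<noteq> {}\<close> obtain b where b: "b \<in> J" "f (f x) \<le> f b"
    unfolding down_closure_def by auto
  have "f a \<le> f x" and "f x \<le> b"
    using a b mono_iff by auto
  with a b J show ?thesis
    unfolding convex_set_def by blast
qed

lemma Ex_op_double_shift_subset:
  assumes R: "R_action \<Lambda>" and e: "e \<ge> 0" and J: "convex_set J" "J \<noteq> {}"
    and sub: "I \<subseteq> Ex_op \<Lambda> e J"
  shows "I \<inter> neg_image \<Lambda> (2 * e) I \<subseteq> neg_image \<Lambda> e J"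
proof
  fix x assume "x \<in> I \<inter> neg_image \<Lambda> (2 * e) I"
  then have "x \<in> I" and "\<Lambda> e (\<Lambda> e x) \<in> I"
    using neg_image_eq_vimage[OF R] R_action_double[OF R e] e by auto
  with sub have "x \<in> up_closure (\<Lambda> e -` J)" and "\<Lambda> e (\<Lambda> e x) \<in> down_closure (\<Lambda> e ` J)"
    unfolding Ex_op_def by auto
  then have "\<Lambda> e x \<in> J"
    using convex_set_mem_shift[OF R_action_order_automorphism[OF R e] J] by blast
  then show "x \<in> neg_image \<Lambda> e J"
    using neg_image_eq_vimage[OF R e] by simp
qed

theorem lemma2p16:
  fixes \<Lambda> :: "real \<Rightarrow> 'a::order \<Rightarrow> 'a" and I J :: "'a set" and e :: real
  assumes "R_action \<Lambda>"
    and "is_interval I" and "is_interval J"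
    and "e \<ge> 0"
    and "I \<subseteq> Ex_op \<Lambda> e J" and "J \<subseteq> Ex_op \<Lambda> e I"
  shows "(I \<inter> neg_image \<Lambda> e J \<inter> neg_image \<Lambda> (2*e) I = I \<inter> neg_image \<Lambda> (2*e) I) \<and>
           (J \<inter> neg_image \<Lambda> e I \<inter> neg_image \<Lambda> (2*e) J = J \<inter> neg_image \<Lambda> (2*e) J)"
proof -
  have "I \<inter> neg_image \<Lambda> (2*e) I \<subseteq> neg_image \<Lambda> e J"
    using assms(3) by (intro Ex_op_double_shift_subset[OF assms(1,4) _ _ assms(5)])
      (auto simp: is_interval_def)
  moreover have "J \<inter> neg_image \<Lambda> (2*e) J \<subseteq> neg_image \<Lambda> e I"
    using assms(2) by (intro Ex_op_double_shift_subset[OF assms(1,4) _ _ assms(6)])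
      (auto simp: is_interval_def)
  ultimately show ?thesis
    by blast
qed

end
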